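(* Let $(X,<)$ be a linearly ordered set and define relations on $\beta X$ by $u\trianglelefteq v\iff (u\,\tilde\le\,v\ \vee\ v\,\tilde\ge\,u)$ and $u\equiv v\iff(u\trianglelefteq v\wedge v\trianglelefteq u)$. Then for all $u,v\in\beta X$, $$u\trianglelefteq v\iff\mathrm{supp}(u)\le\mathrm{supp}(v),\qquad u\equiv v\iff\mathrm{supp}(u)=\mathrm{supp}(v).$$ Hence $\trianglelefteq$ is a linear pre-order on $\beta X$, $\equiv$ is an equivalence relation, and the quotient $\beta X/\!\equiv$ with the induced linear order is isomorphic (via $[u]\mapsto\mathrm{supp}(u)$) to the set $s(X)$ of supports of ultrafilters over $X$ with its natural order.
   Context: $\beta X$ is the set of ultrafilters over $X$; $\tilde x=\{S\subseteq X:x\in S\}$. For a binary relation $R$ on $X$, $u\,\tilde R\,v\iff\{x\in X:\{y\in X:x\,R\,y\}\in v\}\in u$. $I_u=\bigcap\{I\in u: I\text{ initial segment of }X\}$, $J_u=\bigcap\{J\in u: J\text{ final segment of }X\}$; for non-principal $u$ exactly one of $I_u\in u$, $J_u\in u$ holds. Supports: $\mathrm{supp}(\tilde x)=\{x\}$; for non-principal $u$, $\mathrm{supp}(u)$ is $I_u$ regarded as a left half-cut if $I_u\in u$, and $J_u$ regarded as a right half-cut if $J_u\in u$; supports are equal iff of the same kind and equal as sets. $s(X)$ is the set of all such supports (all points $\{x\}$, all nonempty initial segments without greatest element as left half-cuts, all nonempty final segments without least element as right half-cuts). Natural linear order on $s(X)$: $\{x\}<\{y\}$ iff $x<y$; $\{x\}<I$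 iff $x\in I$, $I<\{x\}$ iff $x\notin I$; $\{x\}<J$ iff $x\notin J$, $J<\{x\}$ iff $x\in J$; $I<I'$ iff $I\subsetneq I'$; $J<J'$ iff $J\supsetneq J'$; $I<J$ iff $I\cap J=\emptyset$, $J<I$ iff $I\cap J\ne\emptyset$; $\le$ is its reflexive version. *)

theory Defs
  imports Main
begin

definition ultrafilter_on :: "'a set set \<Rightarrow> bool" where
  "ultrafilter_on u \<longleftrightarrow>
     UNIV \<in> u \<and> {} \<notin> u \<and>
     (\<forall>A B. A \<in> u \<and> B \<in> u \<longrightarrow> A \<inter> B \<in> u) \<and>
     (\<forall>A B. A \<in> u \<and> A \<subseteq> B \<longrightarrow> B \<in> u) \<and>
     (\<forall>A. A \<in> u \<or> - A \<in> u)"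

definition betaX :: "'a set set set" where
  "betaX = {u. ultrafilter_on u}"

definition principal :: "'a \<Rightarrow> 'a set set" where
  "principal x = {S. x \<in> S}"

definition ext_rel :: "('a \<Rightarrow> 'a \<Rightarrow> bool) \<Rightarrow> 'a set set \<Rightarrow> 'a set set \<Rightarrow> bool" where
  "ext_rel R u v \<longleftrightarrow> {x. {y. R x y} \<in> v} \<in> u"

definition initial_seg :: "'a::linorder set \<Rightarrow> bool" where
  "initial_seg I \<longleftrightarrow> (\<forall>x y. x \<in> I \<and> y \<le> x \<longrightarrow> y \<in> I)"

definition final_seg :: "'a::linorder set \<Rightarrow> bool" where
  "final_seg J \<longleftrightarrow> (\<forall>x y. x \<in> J \<and> x \<le> y \<longrightarrow> y \<in> J)"

definition I_of :: "'a::linorder set set \<Rightarrow> 'a set" where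
  "I_of u = \<Inter>{I \<in> u. initial_seg I}"

definition J_of :: "'a::linorder set set \<Rightarrow> 'a set" where
  "J_of u = \<Inter>{J \<in> u. final_seg J}"

text \<open>Supports: points, left half-cuts (initial segments), right half-cuts (final segments).\<close>
datatype 'a support = Pt 'a | LCut "'a set" | RCut "'a set"

definition supp :: "'a::linorder set set \<Rightarrow> 'a support" where
  "supp u = (if \<exists>x. u = principal x then Pt (THE x. u = principal x)
             else if I_of u \<in> u then LCut (I_of u) else RCut (J_of u))"

definition sX :: "'a::linorder support set" where
  "sX = range Pt
      \<union> {LCut I | I. I \<noteq> {} \<and> initial_seg I \<and> \<not> (\<exists>m\<in>I. \<forall>x\<in>I. x \<le> m)}
      \<union> {RCut J | J. J \<noteq> {} \<and> final_seg J \<and> \<not> (\<exists>m\<in>J. \<forall>x\<in>J. m \<le> x)}"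

fun supp_less :: "'a::linorder support \<Rightarrow> 'a support \<Rightarrow> bool" where
  "supp_less (Pt x) (Pt y) = (x < y)"
| "supp_less (Pt x) (LCut I) = (x \<in> I)"
| "supp_less (LCut I) (Pt x) = (x \<notin> I)"
| "supp_less (Pt x) (RCut J) = (x \<notin> J)"
| "supp_less (RCut J) (Pt x) = (x \<in> J)"
| "supp_less (LCut I) (LCut I') = (I \<subset> I')"
| "supp_less (RCut J) (RCut J') = (J' \<subset> J)"
| "supp_less (LCut I) (RCut J) = (I \<inter> J = {})"
| "supp_less (RCut J) (LCut I) = (I \<inter> J \<noteq> {})"

definition supp_le :: "'a::linorder support \<Rightarrow> 'a support \<Rightarrow> bool" where
  "supp_le s t \<longleftrightarrow> supp_less s t \<or> s = t"

definition tri_le :: "'a::linorder set set \<Rightarrow> 'a set set \<Rightarrow> bool" where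
  "tri_le u v \<longleftrightarrow> ext_rel (\<le>) u v \<or> ext_rel (\<ge>) v u"

definition tri_eq :: "'a::linorder set set \<Rightarrow> 'a set set \<Rightarrow> bool" where
  "tri_eq u v \<longleftrightarrow> tri_le u v \<and> tri_le v u"

definition tri_eq_rel :: "('a::linorder set set \<times> 'a set set) set" where
  "tri_eq_rel = {(u, v). u \<in> betaX \<and> v \<in> betaX \<and> tri_eq u v}"

end

theory Submission
  imports Defs
begin

text \<open>An ultrafilter \<open>u\<close> lies strictly above the points of the initial segment
  \<open>below u = {x. {y. x < y} \<in> u}\<close>, and relative to this cut it either contains the cut, is
  principal at the point just above it, or contains the complement of the cut. Comparing
  ultrafilters by \<open>\<unlhd>\<close> turns out to be the lexicographic comparison of the cut (under inclusion)
  and this position (0 < 1 < 2); the natural order of supports is the lexicographic comparison of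
  the same data read off a support, and \<open>supp\<close> preserves it. Every support occurs, because the
  tails of a half-cut form a filter base, which extends to an ultrafilter by Zorn's lemma.\<close>

section \<open>Filters and ultrafilters\<close>

definition proper_filter :: "'a set set \<Rightarrow> bool" where
  "proper_filter F \<longleftrightarrow> UNIV \<in> F \<and> {} \<notin> F \<and>
     (\<forall>A B. A \<in> F \<and> B \<in> F \<longrightarrow> A \<inter> B \<in> F) \<and> (\<forall>A B. A \<in> F \<and> A \<subseteq> B \<longrightarrow> B \<in> F)"

lemma proper_filter_Union_chain:
  assumes "C \<noteq> {}" and "\<And>F. F \<in> C \<Longrightarrow> proper_filter F" and "chain\<^sub>\<subseteq> C"
  shows "proper_filter (\<Union>C)"
  unfolding proper_filter_def
proof (intro conjI allI impI)
  show "UNIV \<in> \<Union>C" "{} \<notin> \<Union>C"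
    using assms(1,2) by (auto simp: proper_filter_def)
next
  fix A B assume "A \<in> \<Union>C \<and> B \<in> \<Union>C"
  then obtain F G where "F \<in> C" "A \<in> F" "G \<in> C" "B \<in> G" by blast
  moreover have "F \<subseteq> G \<or> G \<subseteq> F"
    using assms(3) \<open>F \<in> C\<close> \<open>G \<in> C\<close> by (auto simp: chain_subset_def)
  ultimately show "A \<inter> B \<in> \<Union>C"
    using assms(2) unfolding proper_filter_def by blast
next
  fix A B assume "A \<in> \<Union>C \<and> A \<subseteq> B"
  then show "B \<in> \<Union>C" using assms(2) unfolding proper_filter_def by blast
qed

lemma maximal_proper_filter_is_ultrafilter:
  assumes M: "proper_filter M"
    and maximal: "\<And>F. proper_filter F \<Longrightarrow> M \<subseteq> F \<Longrightarrow> F = M"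
  shows "ultrafilter_on M"
proof -
  have "X \<in> M" if "- X \<notin> M" for X
  proof -
    let ?F = "{S. \<exists>m\<in>M. m \<inter> X \<subseteq> S}"
    have "proper_filter ?F"
      unfolding proper_filter_def
    proof (intro conjI allI impI)
      show "UNIV \<in> ?F" using M by (auto simp: proper_filter_def)
      show "{} \<notin> ?F"
      proof
        assume "{} \<in> ?F"
        then obtain m where "m \<in> M" "m \<subseteq> - X" by blast
        with M \<open>- X \<notin> M\<close> show False by (auto simp: proper_filter_def)
      qed
    next
      fix S T assume "S \<in> ?F \<and> T \<in> ?F"
      then obtain m n where "m \<in> M" "m \<inter> X \<subseteq> S" "n \<in> M" "n \<inter> X \<subseteq> T" by blast
      with M show "S \<inter> T \<in> ?F"
        unfolding proper_filter_def by (intro CollectI bexI[of _ "m \<inter> n"]) auto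
    qed blast
    moreover have "M \<subseteq> ?F" by blast
    ultimately have "?F = M" by (rule maximal)
    moreover have "X \<in> ?F" using M by (auto simp: proper_filter_def)
    ultimately show ?thesis by simp
  qed
  with M show ?thesis
    unfolding ultrafilter_on_def proper_filter_def by blast
qed

lemma proper_filter_extends_to_ultrafilter:
  assumes "proper_filter B"
  shows "\<exists>u. ultrafilter_on u \<and> B \<subseteq> u"
proof -
  let ?A = "{F. proper_filter F \<and> B \<subseteq> F}"
  have "\<exists>U\<in>?A. \<forall>F\<in>C. F \<subseteq> U" if "C \<in> chains ?A" for C
  proof (cases "C = {}")
    case True
    with assms show ?thesis by blast
  next
    case False
    with that have "proper_filter (\<Union>C)" "B \<subseteq> \<Union>C"
      by (auto simp: chains_def intro!: proper_filter_Union_chain)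
    then show ?thesis by blast
  qed
  then obtain M where "M \<in> ?A" and "\<forall>F\<in>?A. M \<subseteq> F \<longrightarrow> F = M"
    using Zorn_Lemma2[of ?A] by blast
  then have "ultrafilter_on M"
    by (intro maximal_proper_filter_is_ultrafilter) auto
  with \<open>M \<in> ?A\<close> show ?thesis by blast
qed

lemma filter_base_extends_to_ultrafilter:
  assumes "B \<noteq> {}" and "{} \<notin> B"
    and directed: "\<And>a b. a \<in> B \<Longrightarrow> b \<in> B \<Longrightarrow> \<exists>c\<in>B. c \<subseteq> a \<inter> b"
  shows "\<exists>u. ultrafilter_on u \<and> B \<subseteq> u"
proof -
  let ?F = "{S. \<exists>b\<in>B. b \<subseteq> S}"
  have F: "proper_filter ?F"
    unfolding proper_filter_def
  proof (intro conjI allI impI)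
    show "UNIV \<in> ?F" using assms(1) by blast
    show "{} \<notin> ?F" using assms(2) by auto
  next
    fix S T assume "S \<in> ?F \<and> T \<in> ?F"
    then obtain a b where "a \<in> B" "a \<subseteq> S" "b \<in> B" "b \<subseteq> T" by blast
    moreover obtain c where "c \<in> B" "c \<subseteq> a \<inter> b"
      using directed[OF \<open>a \<in> B\<close> \<open>b \<in> B\<close>] by blast
    ultimately show "S \<inter> T \<in> ?F" by blast
  qed blast
  obtain u where "ultrafilter_on u" "?F \<subseteq> u"
    using proper_filter_extends_to_ultrafilter[OF F] by blast
  then show ?thesis by blast
qed

lemma ultrafilter_on_mono: "ultrafilter_on u \<Longrightarrow> A \<in> u \<Longrightarrow> A \<subseteq> B \<Longrightarrow> B \<in> u"
  unfolding ultrafilter_on_def by blast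

lemma ultrafilter_on_Int: "ultrafilter_on u \<Longrightarrow> A \<in> u \<Longrightarrow> B \<in> u \<Longrightarrow> A \<inter> B \<in> u"
  unfolding ultrafilter_on_def by blast

lemma ultrafilter_on_disjoint:
  "ultrafilter_on u \<Longrightarrow> A \<in> u \<Longrightarrow> B \<in> u \<Longrightarrow> A \<inter> B = {} \<Longrightarrow> False"
  unfolding ultrafilter_on_def by metis

lemma ultrafilter_on_Compl_iff: "ultrafilter_on u \<Longrightarrow> - A \<in> u \<longleftrightarrow> A \<notin> u"
  unfolding ultrafilter_on_def by (metis Compl_disjoint)

lemma ultrafilter_on_principal: "ultrafilter_on (principal x)"
  unfolding ultrafilter_on_def principal_def by auto

lemma principal_inject: "principal x = principal y \<longleftrightarrow> x = y"
  unfolding principal_def by auto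

lemma ultrafilter_on_singleton_imp_principal:
  assumes u: "ultrafilter_on u" and "{x} \<in> u"
  shows "u = principal x"
  unfolding principal_def
  using assms ultrafilter_on_disjoint[OF u \<open>{x} \<in> u\<close>] ultrafilter_on_mono[OF u \<open>{x} \<in> u\<close>]
  by blast

lemma mem_betaX: "u \<in> betaX \<longleftrightarrow> ultrafilter_on u"
  by (simp add: betaX_def)

section \<open>Initial and final segments\<close>

lemma initial_seg_linear: "initial_seg (A::'a::linorder set) \<Longrightarrow> initial_seg B \<Longrightarrow> A \<subseteq> B \<or> B \<subseteq> A"
  unfolding initial_seg_def by (meson linear subsetI)

lemma initial_seg_Compl_iff: "initial_seg (- A) \<longleftrightarrow> final_seg (A::'a::linorder set)"
  unfolding initial_seg_def final_seg_def by blast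

lemma initial_seg_subset_lessThan_iff:
  assumes "initial_seg I"
  shows "I \<subseteq> {..<x} \<longleftrightarrow> x \<notin> I"
proof
  show "x \<notin> I" if "I \<subseteq> {..<x}" using that by blast
next
  assume "x \<notin> I"
  have "y < x" if "y \<in> I" for y
    using assms \<open>x \<notin> I\<close> that unfolding initial_seg_def by (meson linorder_not_less)
  then show "I \<subseteq> {..<x}" by blast
qed

lemma initial_seg_lessThan_psubset_iff:
  assumes "initial_seg I"
  shows "{..<x} \<subset> I \<longleftrightarrow> x \<in> I"
proof
  show "x \<in> I" if "{..<x} \<subset> I"
    using that initial_seg_subset_lessThan_iff[OF assms, of x] by blast
next
  assume "x \<in> I"
  then have "{..<x} \<subseteq> I"
    using assms unfolding initial_seg_def by (blast intro: less_imp_le)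
  with \<open>x \<in> I\<close> show "{..<x} \<subset> I" by blast
qed

lemma Compl_no_least_neq_lessThan:
  fixes J :: "'a::linorder set"
  assumes "\<not> (\<exists>m\<in>J. \<forall>y\<in>J. m \<le> y)"
  shows "- J \<noteq> {..<x}"
proof
  assume "- J = {..<x}"
  then have notin: "y \<notin> J \<longleftrightarrow> y < x" for y
    by (metis Compl_iff lessThan_iff)
  have "x \<in> J" using notin[of x] by blast
  moreover have "x \<le> y" if "y \<in> J" for y
    using notin[of y] that not_less by blast
  ultimately show False using assms by blast
qed

lemma final_seg_lessThan_subset_Compl_iff:
  assumes "final_seg J" and "\<not> (\<exists>m\<in>J. \<forall>y\<in>J. m \<le> y)"
  shows "{..<x} \<subseteq> - J \<longleftrightarrow> x \<notin> J"
  using initial_seg_lessThan_psubset_iff[of "- J" x] Compl_no_least_neq_lessThan[OF assms(2), of x]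
    assms(1) by (auto simp: initial_seg_Compl_iff subset_iff_psubset_eq)

lemma final_seg_Compl_psubset_lessThan_iff:
  assumes "final_seg J" and "\<not> (\<exists>m\<in>J. \<forall>y\<in>J. m \<le> y)"
  shows "- J \<subset> {..<x} \<longleftrightarrow> x \<in> J"
  using initial_seg_subset_lessThan_iff[of "- J" x] Compl_no_least_neq_lessThan[OF assms(2), of x]
    assms(1) by (auto simp: initial_seg_Compl_iff psubset_eq)

section \<open>Quotient by the kernel of a map\<close>

lemma equiv_kernel_restrict: "equiv A (Restr (kernel f) A)"
  by (auto simp: equiv_def refl_on_def sym_def trans_def kernel_def)

lemma kernel_restrict_Image: "x \<in> A \<Longrightarrow> Restr (kernel f) A `` {x} = {y \<in> A. f y = f x}"
  by (auto simp: kernel_def)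

lemma quotient_kernel_restrict_elem:
  assumes "C \<in> A // Restr (kernel f) A"
  obtains x where "x \<in> A" and "C = {y \<in> A. f y = f x}" and "the_elem (f ` C) = f x"
proof -
  obtain x where "x \<in> A" and C: "C = {y \<in> A. f y = f x}"
    using assms by (auto elim!: quotientE simp: kernel_restrict_Image)
  moreover have "f ` C = {f x}" using C \<open>x \<in> A\<close> by auto
  ultimately show ?thesis using that by simp
qed

lemma quotient_kernel_restrict_the_elem:
  "C \<in> A // Restr (kernel f) A \<Longrightarrow> x \<in> C \<Longrightarrow> the_elem (f ` C) = f x"
  by (elim quotient_kernel_restrict_elem) auto

lemma bij_betw_quotient_kernel_restrict:
  "bij_betw (\<lambda>C. the_elem (f ` C)) (A // Restr (kernel f) A) (f ` A)"
proof (rule bij_betwI')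
  fix C D assume "C \<in> A // Restr (kernel f) A" and "D \<in> A // Restr (kernel f) A"
  then show "the_elem (f ` C) = the_elem (f ` D) \<longleftrightarrow> C = D"
    by (elim quotient_kernel_restrict_elem) auto
next
  fix C assume "C \<in> A // Restr (kernel f) A"
  then show "the_elem (f ` C) \<in> f ` A"
    by (elim quotient_kernel_restrict_elem) auto
next
  fix y assume "y \<in> f ` A"
  then obtain x where "x \<in> A" and "y = f x" by blast
  let ?C = "Restr (kernel f) A `` {x}"
  have "?C \<in> A // Restr (kernel f) A" using \<open>x \<in> A\<close> by (rule quotientI)
  moreover have "x \<in> ?C" using \<open>x \<in> A\<close> by (simp add: kernel_restrict_Image)
  ultimately show "\<exists>C\<in>A // Restr (kernel f) A. y = the_elem (f ` C)"
    using \<open>y = f x\<close> quotient_kernel_restrict_the_elem by metis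
qed

lemma quotient_kernel_restrict_rel_iff:
  assumes "\<And>x y. x \<in> A \<Longrightarrow> y \<in> A \<Longrightarrow> P x y \<longleftrightarrow> Q (f x) (f y)"
    and "C \<in> A // Restr (kernel f) A" and "D \<in> A // Restr (kernel f) A"
  shows "(\<exists>x\<in>C. \<exists>y\<in>D. P x y) \<longleftrightarrow> Q (the_elem (f ` C)) (the_elem (f ` D))"
  using assms(2,3) by (elim quotient_kernel_restrict_elem) (auto simp: assms(1))

section \<open>The cut of an ultrafilter\<close>

definition below :: "'a::linorder set set \<Rightarrow> 'a set" where
  "below u = {x. {y. x < y} \<in> u}"

text \<open>The position of \<open>u\<close> relative to its cut: 0 when \<open>supp u\<close> is the left half-cut
  \<open>below u\<close>, 1 when \<open>u\<close> is principal at the least point above the cut, 2 when \<open>supp u\<close> is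
  the right half-cut \<open>- below u\<close>.\<close>
definition side :: "'a::linorder set set \<Rightarrow> nat" where
  "side u = (if below u \<in> u then 0 else if \<exists>z. u = principal z then 1 else 2)"

definition key_le :: "'a set \<times> nat \<Rightarrow> 'a set \<times> nat \<Rightarrow> bool" where
  "key_le p q \<longleftrightarrow> fst p \<subset> fst q \<or> (fst p = fst q \<and> snd p \<le> snd q)"

lemma key_le_iff_subset: "m \<le> n \<Longrightarrow> key_le (A, m) (B, n) \<longleftrightarrow> A \<subseteq> B"
  by (auto simp: key_le_def)

lemma key_le_iff_psubset: "n < m \<Longrightarrow> key_le (A, m) (B, n) \<longleftrightarrow> A \<subset> B"
  by (auto simp: key_le_def)

lemma initial_seg_below: "ultrafilter_on u \<Longrightarrow> initial_seg (below u)"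
  unfolding initial_seg_def below_def
  by (auto elim!: ultrafilter_on_mono)

lemma notin_below_iff: "ultrafilter_on u \<Longrightarrow> x \<notin> below u \<longleftrightarrow> {y. y \<le> x} \<in> u"
  using ultrafilter_on_Compl_iff[of u "{y. x < y}"]
  by (simp add: below_def Compl_eq not_less)

lemma below_principal: "below (principal z) = {..<z}"
  unfolding below_def principal_def by auto

lemma side_principal: "side (principal z) = 1"
  unfolding side_def below_principal by (auto simp: principal_def)

lemma atLeast_mem_iff:
  assumes v: "ultrafilter_on v"
  shows "{y. x \<le> y} \<in> v \<longleftrightarrow> x \<in> below v \<or> {x} \<in> v"
proof
  assume ge: "{y. x \<le> y} \<in> v"
  show "x \<in> below v \<or> {x} \<in> v"
  proof (cases "x \<in> below v")
    case False
    with v have "{y. y \<le> x} \<in> v" by (simp add: notin_below_iff)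
    with ultrafilter_on_Int[OF v ge] have "{y. x \<le> y} \<inter> {y. y \<le> x} \<in> v" .
    then have "{x} \<in> v" by (rule ultrafilter_on_mono[OF v]) auto
    then show ?thesis ..
  qed simp
next
  assume "x \<in> below v \<or> {x} \<in> v"
  then show "{y. x \<le> y} \<in> v"
    by (auto simp: below_def elim: ultrafilter_on_mono[OF v])
qed

lemma initial_seg_mem_iff:
  assumes u: "ultrafilter_on u" and K: "initial_seg K"
  shows "K \<in> u \<longleftrightarrow> \<not> K \<subseteq> below u \<or> (K = below u \<and> below u \<in> u)"
proof (cases "K \<subseteq> below u")
  case True
  show ?thesis
  proof (cases "K = below u")
    case False
    with True obtain x where "x \<in> below u" "x \<notin> K" by blast
    then have "{y. x < y} \<in> u" and "K \<inter> {y. x < y} = {}"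
      using K unfolding below_def initial_seg_def by (blast dest: less_imp_le)+
    then have "K \<notin> u" using ultrafilter_on_disjoint[OF u] by blast
    with True False show ?thesis by blast
  qed simp
next
  case False
  then obtain x where "x \<in> K" "x \<notin> below u" by blast
  then have "{y. y \<le> x} \<in> u" and "{y. y \<le> x} \<subseteq> K"
    using u K by (auto simp: notin_below_iff initial_seg_def)
  with False show ?thesis using ultrafilter_on_mono[OF u] by blast
qed

lemma below_no_max:
  assumes u: "ultrafilter_on u" and "below u \<in> u" and "z \<in> below u"
  shows "\<exists>w\<in>below u. z < w"
proof -
  have "{y. z < y} \<in> u" using \<open>z \<in> below u\<close> by (simp add: below_def)
  with \<open>below u \<in> u\<close> have "below u \<inter> {y. z < y} \<in> u" by (rule ultrafilter_on_Int[OF u])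
  then have "below u \<inter> {y. z < y} \<noteq> {}" using u by (auto simp: ultrafilter_on_def)
  then show ?thesis by blast
qed

lemma lessThan_mem_if_notin_below:
  assumes u: "ultrafilter_on u" and np: "\<nexists>z. u = principal z" and "x \<notin> below u"
  shows "{..<x} \<in> u"
proof -
  have "{y. y \<le> x} \<in> u" using u \<open>x \<notin> below u\<close> by (simp add: notin_below_iff)
  moreover have "- {x} \<in> u"
    using np ultrafilter_on_singleton_imp_principal[OF u] ultrafilter_on_Compl_iff[OF u] by blast
  ultimately have "{y. y \<le> x} \<inter> - {x} \<in> u" by (rule ultrafilter_on_Int[OF u])
  then show ?thesis by (rule ultrafilter_on_mono[OF u]) auto
qed

lemma ext_rel_ge_iff:
  assumes u: "ultrafilter_on u" and v: "ultrafilter_on v"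
  shows "ext_rel (\<ge>) v u \<longleftrightarrow> below u \<notin> v"
proof -
  have "{x. {y. x \<ge> y} \<in> u} = - below u"
    using notin_below_iff[OF u] by auto
  then show ?thesis
    by (simp add: ext_rel_def ultrafilter_on_Compl_iff[OF v])
qed

lemma ext_rel_le_principal:
  assumes u: "ultrafilter_on u"
  shows "ext_rel (\<le>) u (principal z) \<longleftrightarrow> z \<notin> below u"
proof -
  have "{x. {y. x \<le> y} \<in> principal z} = {y. y \<le> z}"
    by (simp add: principal_def)
  then show ?thesis
    by (simp add: ext_rel_def notin_below_iff[OF u])
qed

lemma ext_rel_le_nonprincipal:
  assumes v: "ultrafilter_on v" and np: "\<nexists>z. v = principal z"
  shows "ext_rel (\<le>) u v \<longleftrightarrow> below v \<in> u"
proof -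
  have "{y. x \<le> y} \<in> v \<longleftrightarrow> x \<in> below v" for x
    using atLeast_mem_iff[OF v] ultrafilter_on_singleton_imp_principal[OF v] np by blast
  then show ?thesis by (simp add: ext_rel_def)
qed

lemma tri_le_principal_iff:
  assumes u: "ultrafilter_on u"
  shows "tri_le u (principal z) \<longleftrightarrow> key_le (below u, side u) ({..<z}, 1)"
proof -
  have tri: "tri_le u (principal z) \<longleftrightarrow> z \<notin> below u"
    unfolding tri_le_def ext_rel_le_principal[OF u] ext_rel_ge_iff[OF u ultrafilter_on_principal]
    by (simp add: principal_def)
  have "z \<notin> below u \<longleftrightarrow> below u \<subseteq> {..<z}"
    using initial_seg_subset_lessThan_iff[OF initial_seg_below[OF u]] by blast
  moreover have "side u \<le> 1" if "below u = {..<z}"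
  proof -
    have "{..<z} \<in> u" if "\<nexists>z. u = principal z"
      using lessThan_mem_if_notin_below[OF u that] \<open>below u = {..<z}\<close> by simp
    with \<open>below u = {..<z}\<close> show ?thesis by (auto simp: side_def)
  qed
  ultimately show ?thesis
    unfolding tri key_le_def by auto
qed

lemma tri_le_nonprincipal_iff:
  assumes u: "ultrafilter_on u" and v: "ultrafilter_on v" and np: "\<nexists>z. v = principal z"
  shows "tri_le u v \<longleftrightarrow> key_le (below u, side u) (below v, side v)"
proof -
  have "tri_le u v \<longleftrightarrow> below v \<in> u \<or> below u \<notin> v"
    unfolding tri_le_def ext_rel_le_nonprincipal[OF v np] ext_rel_ge_iff[OF u v] ..
  also have "\<dots> \<longleftrightarrow> \<not> below v \<subseteq> below u \<or> (below v = below u \<and> below u \<in> u)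
      \<or> \<not> (\<not> below u \<subseteq> below v \<or> (below u = below v \<and> below v \<in> v))"
    using initial_seg_mem_iff[OF u initial_seg_below[OF v]]
      initial_seg_mem_iff[OF v initial_seg_below[OF u]] by blast
  also have "\<dots> \<longleftrightarrow> key_le (below u, side u) (below v, side v)"
    using initial_seg_linear[OF initial_seg_below[OF u] initial_seg_below[OF v]] np
    by (auto simp: key_le_def side_def)
  finally show ?thesis .
qed

theorem tri_le_iff_key_le:
  assumes u: "ultrafilter_on u" and v: "ultrafilter_on v"
  shows "tri_le u v \<longleftrightarrow> key_le (below u, side u) (below v, side v)"
proof (cases "\<exists>z. v = principal z")
  case True
  then obtain z where "v = principal z" by blast
  then show ?thesis
    using tri_le_principal_iff[OF u] by (simp add: below_principal side_principal)
qed (use tri_le_nonprincipal_iff[OF u v] in blast)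

lemma tri_le_refl: "ultrafilter_on u \<Longrightarrow> tri_le u u"
  by (simp add: tri_le_iff_key_le key_le_def)

lemma tri_le_trans:
  "\<lbrakk>ultrafilter_on u; ultrafilter_on v; ultrafilter_on w; tri_le u v; tri_le v w\<rbrakk> \<Longrightarrow> tri_le u w"
  by (auto simp: tri_le_iff_key_le key_le_def)

lemma tri_le_total: "ultrafilter_on u \<Longrightarrow> ultrafilter_on v \<Longrightarrow> tri_le u v \<or> tri_le v u"
  using initial_seg_linear[OF initial_seg_below initial_seg_below, of u v]
  by (auto simp: tri_le_iff_key_le key_le_def)

lemma tri_eq_iff_key_eq:
  "ultrafilter_on u \<Longrightarrow> ultrafilter_on v \<Longrightarrow> tri_eq u v \<longleftrightarrow> (below u, side u) = (below v, side v)"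
  by (auto simp: tri_eq_def tri_le_iff_key_le key_le_def)

section \<open>Supports\<close>

fun support_key :: "'a::linorder support \<Rightarrow> 'a set \<times> nat" where
  "support_key (Pt x) = ({..<x}, 1)"
| "support_key (LCut I) = (I, 0)"
| "support_key (RCut J) = (- J, 2)"

lemma inj_support_key: "inj support_key"
proof (rule injI)
  fix s t :: "'a support"
  show "support_key s = support_key t \<Longrightarrow> s = t"
    by (cases s; cases t) auto
qed

lemma sX_cases [consumes 1, case_names Pt LCut RCut]:
  assumes "s \<in> sX"
  obtains x where "s = Pt x"
  | I where "s = LCut I" "I \<noteq> {}" "initial_seg I" "\<not> (\<exists>m\<in>I. \<forall>x\<in>I. x \<le> m)"
  | J where "s = RCut J" "J \<noteq> {}" "final_seg J" "\<not> (\<exists>m\<in>J. \<forall>x\<in>J. m \<le> x)"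
  using assms unfolding sX_def by blast

theorem supp_le_iff_key_le:
  assumes "s \<in> sX" and "t \<in> sX"
  shows "supp_le s t \<longleftrightarrow> key_le (support_key s) (support_key t)"
  using assms(1)
proof (cases rule: sX_cases)
  case (Pt x)
  from assms(2) show ?thesis
    by (cases rule: sX_cases)
      (auto simp: Pt supp_le_def key_le_iff_subset key_le_iff_psubset
         initial_seg_lessThan_psubset_iff final_seg_lessThan_subset_Compl_iff)
next
  case (LCut I)
  from assms(2) show ?thesis
    by (cases rule: sX_cases)
      (auto simp: LCut supp_le_def key_le_iff_subset key_le_iff_psubset
         initial_seg_subset_lessThan_iff)
next
  case (RCut J)
  from assms(2) show ?thesis
  proof (cases rule: sX_cases)
    case (LCut I)
    then show ?thesis
      using initial_seg_linear[of I "- J"] \<open>final_seg J\<close>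
      by (auto simp: RCut supp_le_def key_le_iff_psubset initial_seg_Compl_iff)
  qed (auto simp: RCut supp_le_def key_le_iff_subset key_le_iff_psubset
         final_seg_Compl_psubset_lessThan_iff)
qed

lemma supp_principal: "supp (principal z) = Pt z"
  by (auto simp: supp_def principal_inject)

lemma I_of_eq_below:
  assumes u: "ultrafilter_on u" and np: "\<nexists>z. u = principal z"
  shows "I_of u = below u"
proof
  show "I_of u \<subseteq> below u"
  proof
    fix x assume "x \<in> I_of u"
    show "x \<in> below u"
    proof (rule ccontr)
      assume "x \<notin> below u"
      then have "{..<x} \<in> u" by (rule lessThan_mem_if_notin_below[OF u np])
      moreover have "initial_seg {..<x}" by (auto simp: initial_seg_def)
      ultimately have "I_of u \<subseteq> {..<x}" unfolding I_of_def by blast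
      with \<open>x \<in> I_of u\<close> show False by blast
    qed
  qed
next
  have "below u \<subseteq> K" if "K \<in> u" and "initial_seg K" for K
    using that initial_seg_mem_iff[OF u] initial_seg_linear[OF that(2) initial_seg_below[OF u]]
    by blast
  then show "below u \<subseteq> I_of u" unfolding I_of_def by blast
qed

lemma J_of_eq_Compl_below:
  assumes u: "ultrafilter_on u" and "below u \<notin> u"
  shows "J_of u = - below u"
proof
  have "- below u \<in> u" and "final_seg (- below u)"
    using assms initial_seg_below[OF u]
    by (simp_all add: ultrafilter_on_Compl_iff initial_seg_Compl_iff[symmetric])
  then show "J_of u \<subseteq> - below u" unfolding J_of_def by blast
next
  have "- below u \<subseteq> M" if "M \<in> u" and "final_seg M" for M
  proof -
    have "- M \<notin> u" using that ultrafilter_on_Compl_iff[OF u] by blast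
    then have "- M \<subseteq> below u"
      using initial_seg_mem_iff[OF u] that(2) by (simp add: initial_seg_Compl_iff)
    then show ?thesis by blast
  qed
  then show "- below u \<subseteq> J_of u" unfolding J_of_def by blast
qed

lemma supp_nonprincipal:
  assumes u: "ultrafilter_on u" and np: "\<nexists>z. u = principal z"
  shows "supp u = (if below u \<in> u then LCut (below u) else RCut (- below u))"
  using np by (simp add: supp_def I_of_eq_below[OF u np] J_of_eq_Compl_below[OF u])

lemma support_key_supp:
  assumes "ultrafilter_on u"
  shows "support_key (supp u) = (below u, side u)"
proof (cases "\<exists>z. u = principal z")
  case True
  then show ?thesis by (auto simp: supp_principal below_principal side_principal)
qed (simp add: supp_nonprincipal[OF assms] side_def)

lemma supp_in_sX:
  assumes u: "ultrafilter_on u"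
  shows "supp u \<in> sX"
proof (cases "\<exists>z. u = principal z")
  case True
  then show ?thesis by (auto simp: supp_principal sX_def)
next
  case np: False
  show ?thesis
  proof (cases "below u \<in> u")
    case True
    then have "below u \<noteq> {}" using u by (auto simp: ultrafilter_on_def)
    moreover have "\<not> (\<exists>m\<in>below u. \<forall>x\<in>below u. x \<le> m)"
      using below_no_max[OF u True] by (meson not_le)
    ultimately show ?thesis
      using True initial_seg_below[OF u] by (auto simp: supp_nonprincipal[OF u np] sX_def)
  next
    case False
    then have in_u: "- below u \<in> u" by (simp add: ultrafilter_on_Compl_iff[OF u])
    then have "- below u \<noteq> {}" using u by (auto simp: ultrafilter_on_def)
    moreover have "\<not> (\<exists>m\<in>- below u. \<forall>x\<in>- below u. m \<le> x)"
    proof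
      assume "\<exists>m\<in>- below u. \<forall>x\<in>- below u. m \<le> x"
      then obtain m where "m \<notin> below u" and least: "\<forall>x\<in>- below u. m \<le> x" by blast
      have "{..<m} \<in> u" by (rule lessThan_mem_if_notin_below[OF u np \<open>m \<notin> below u\<close>])
      moreover have "{..<m} \<inter> - below u = {}" using least by (auto simp: not_le[symmetric])
      ultimately show False using ultrafilter_on_disjoint[OF u _ in_u] by blast
    qed
    moreover have "final_seg (- below u)"
      using initial_seg_below[OF u] by (simp add: initial_seg_Compl_iff[symmetric])
    ultimately show ?thesis
      using False by (auto simp: supp_nonprincipal[OF u np] sX_def)
  qed
qed

lemma supp_eqI_support_key: "ultrafilter_on u \<Longrightarrow> (below u, side u) = support_key s \<Longrightarrow> supp u = s"
  using inj_support_key support_key_supp by (metis injD)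

lemma ex_ultrafilter_supp_LCut:
  assumes "I \<noteq> {}" and I: "initial_seg I" and no_max: "\<not> (\<exists>m\<in>I. \<forall>x\<in>I. x \<le> m)"
  shows "\<exists>u. ultrafilter_on u \<and> supp u = LCut I"
proof -
  let ?B = "(\<lambda>x. I \<inter> {x<..}) ` I"
  have "\<exists>c\<in>?B. c \<subseteq> a \<inter> b" if ab: "a \<in> ?B" "b \<in> ?B" for a b
  proof -
    obtain x y where "x \<in> I" "y \<in> I" and "a = I \<inter> {x<..}" "b = I \<inter> {y<..}"
      using ab by blast
    moreover have "max x y \<in> I" using \<open>x \<in> I\<close> \<open>y \<in> I\<close> by (simp add: max_def)
    then have "I \<inter> {max x y<..} \<in> ?B" by (rule imageI)
    moreover have "I \<inter> {max x y<..} \<subseteq> a \<inter> b"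
      using \<open>a = I \<inter> {x<..}\<close> \<open>b = I \<inter> {y<..}\<close> by auto
    ultimately show ?thesis by blast
  qed
  moreover have "{} \<notin> ?B" using no_max by (auto simp: not_le)
  ultimately obtain u where u: "ultrafilter_on u" and B: "?B \<subseteq> u"
    using filter_base_extends_to_ultrafilter[of ?B] \<open>I \<noteq> {}\<close> by blast
  have above_mem: "{x<..} \<in> u" if "x \<in> I" for x
    using B that ultrafilter_on_mono[OF u, of "I \<inter> {x<..}"] by blast
  obtain x0 where "x0 \<in> I" using \<open>I \<noteq> {}\<close> by blast
  then have "I \<in> u"
    using B ultrafilter_on_mono[OF u, of "I \<inter> {x0<..}"] by blast
  have "below u = I"
  proof
    show "I \<subseteq> below u"
      using above_mem by (auto simp: below_def greaterThan_def)
    show "below u \<subseteq> I"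
    proof
      fix x assume "x \<in> below u"
      then have "{x<..} \<in> u" by (simp add: below_def greaterThan_def)
      with \<open>I \<in> u\<close> have "I \<inter> {x<..} \<noteq> {}" using ultrafilter_on_disjoint[OF u] by blast
      then show "x \<in> I" using I unfolding initial_seg_def by (blast dest: less_imp_le)
    qed
  qed
  with \<open>I \<in> u\<close> have "supp u = LCut I" by (intro supp_eqI_support_key[OF u]) (simp add: side_def)
  with u show ?thesis by blast
qed

lemma ex_ultrafilter_supp_RCut:
  assumes "J \<noteq> {}" and J: "final_seg J" and no_least: "\<not> (\<exists>m\<in>J. \<forall>x\<in>J. m \<le> x)"
  shows "\<exists>u. ultrafilter_on u \<and> supp u = RCut J"
proof -
  let ?B = "(\<lambda>x. J \<inter> {..<x}) ` J"
  have "\<exists>c\<in>?B. c \<subseteq> a \<inter> b" if ab: "a \<in> ?B" "b \<in> ?B" for a b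
  proof -
    obtain x y where "x \<in> J" "y \<in> J" and "a = J \<inter> {..<x}" "b = J \<inter> {..<y}"
      using ab by blast
    moreover have "min x y \<in> J" using \<open>x \<in> J\<close> \<open>y \<in> J\<close> by (simp add: min_def)
    then have "J \<inter> {..<min x y} \<in> ?B" by (rule imageI)
    moreover have "J \<inter> {..<min x y} \<subseteq> a \<inter> b"
      using \<open>a = J \<inter> {..<x}\<close> \<open>b = J \<inter> {..<y}\<close> by auto
    ultimately show ?thesis by blast
  qed
  moreover have "{} \<notin> ?B" using no_least by (auto simp: not_le)
  ultimately obtain u where u: "ultrafilter_on u" and B: "?B \<subseteq> u"
    using filter_base_extends_to_ultrafilter[of ?B] \<open>J \<noteq> {}\<close> by blast
  obtain x0 where "x0 \<in> J" using \<open>J \<noteq> {}\<close> by blast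
  then have "J \<in> u"
    using B ultrafilter_on_mono[OF u, of "J \<inter> {..<x0}"] by blast
  have "below u = - J"
  proof
    show "- J \<subseteq> below u"
    proof
      fix x assume "x \<in> - J"
      then have "J \<subseteq> {x<..}"
        using J unfolding final_seg_def by (auto simp: subset_eq) (meson linorder_not_less)
      with \<open>J \<in> u\<close> show "x \<in> below u"
        using ultrafilter_on_mono[OF u] by (auto simp: below_def greaterThan_def)
    qed
    show "below u \<subseteq> - J"
    proof
      fix x assume "x \<in> below u"
      show "x \<in> - J"
      proof
        assume "x \<in> J"
        then have "{..<x} \<in> u" using B ultrafilter_on_mono[OF u] by blast
        moreover have "{x<..} \<in> u" using \<open>x \<in> below u\<close> by (simp add: below_def greaterThan_def)
        ultimately show False using ultrafilter_on_disjoint[OF u] by fastforce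
      qed
    qed
  qed
  moreover have "\<nexists>z. u = principal z"
  proof
    assume "\<exists>z. u = principal z"
    then obtain z where "u = principal z" by blast
    with \<open>J \<in> u\<close> B show False by (auto simp: principal_def)
  qed
  moreover have "below u \<notin> u"
    using \<open>J \<in> u\<close> \<open>below u = - J\<close> ultrafilter_on_Compl_iff[OF u] by simp
  ultimately have "supp u = RCut J" by (intro supp_eqI_support_key[OF u]) (simp add: side_def)
  with u show ?thesis by blast
qed

theorem supp_image_betaX: "supp ` betaX = sX"
proof
  show "supp ` betaX \<subseteq> sX" using supp_in_sX by (auto simp: mem_betaX)
next
  show "sX \<subseteq> supp ` betaX"
  proof
    fix s assume "s \<in> sX"
    then have "\<exists>u. ultrafilter_on u \<and> supp u = s"
    proof (cases rule: sX_cases)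
      case (Pt x)
      then show ?thesis
        by (intro exI[of _ "principal x"]) (simp add: ultrafilter_on_principal supp_principal)
    next
      case (LCut I)
      then show ?thesis using ex_ultrafilter_supp_LCut[OF LCut(2-4)] LCut(1) by simp
    next
      case (RCut J)
      then show ?thesis using ex_ultrafilter_supp_RCut[OF RCut(2-4)] RCut(1) by simp
    qed
    then show "s \<in> supp ` betaX" by (auto simp: mem_betaX)
  qed
qed

section \<open>The order on ultrafilters versus the order on supports\<close>

theorem tri_le_iff_supp_le:
  assumes "ultrafilter_on u" and "ultrafilter_on v"
  shows "tri_le u v \<longleftrightarrow> supp_le (supp u) (supp v)"
  using assms by (simp add: tri_le_iff_key_le supp_le_iff_key_le supp_in_sX support_key_supp)

theorem tri_eq_iff_supp_eq:
  assumes "ultrafilter_on u" and "ultrafilter_on v"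
  shows "tri_eq u v \<longleftrightarrow> supp u = supp v"
  using assms
  by (simp add: tri_eq_iff_key_eq support_key_supp[symmetric] inj_eq[OF inj_support_key])

lemma tri_eq_rel_eq_kernel: "tri_eq_rel = Restr (kernel supp) betaX"
  by (auto simp: tri_eq_rel_def kernel_def mem_betaX tri_eq_iff_supp_eq)

theorem corollary2:
  shows "(\<forall>u\<in>(betaX :: 'a::linorder set set set). \<forall>v\<in>betaX.
            (tri_le u v \<longleftrightarrow> supp_le (supp u) (supp v)) \<and>
            (tri_eq u v \<longleftrightarrow> supp u = supp v))
     \<and> (\<forall>u\<in>(betaX :: 'a set set set). tri_le u u)
     \<and> (\<forall>u\<in>(betaX :: 'a set set set). \<forall>v\<in>betaX. \<forall>w\<in>betaX.
            tri_le u v \<and> tri_le v w \<longrightarrow> tri_le u w)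
     \<and> (\<forall>u\<in>(betaX :: 'a set set set). \<forall>v\<in>betaX. tri_le u v \<or> tri_le v u)
     \<and> equiv betaX (tri_eq_rel :: ('a set set \<times> 'a set set) set)
     \<and> supp ` (betaX :: 'a set set set) = sX
     \<and> bij_betw (\<lambda>C. the_elem (supp ` C)) (betaX // (tri_eq_rel :: ('a set set \<times> 'a set set) set)) sX
     \<and> (\<forall>C\<in>betaX // (tri_eq_rel :: ('a set set \<times> 'a set set) set).
          \<forall>D\<in>betaX // (tri_eq_rel :: ('a set set \<times> 'a set set) set).
            ((\<exists>u\<in>C. \<exists>v\<in>D. tri_le u v) \<longleftrightarrow>
             supp_le (the_elem (supp ` C)) (the_elem (supp ` D))))"
proof (intro conjI ballI impI)
  show "tri_le u v \<longleftrightarrow> supp_le (supp u) (supp v)" "tri_eq u v \<longleftrightarrow> supp u = supp v"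
    if "u \<in> betaX" "v \<in> betaX" for u v :: "'a set set"
    using that by (simp_all add: mem_betaX tri_le_iff_supp_le tri_eq_iff_supp_eq)
  show "tri_le u u" if "u \<in> betaX" for u :: "'a set set"
    using that by (simp add: mem_betaX tri_le_refl)
  show "tri_le u w" if "u \<in> betaX" "v \<in> betaX" "w \<in> betaX" "tri_le u v \<and> tri_le v w"
    for u v w :: "'a set set"
    using that tri_le_trans by (auto simp: mem_betaX)
  show "tri_le u v \<or> tri_le v u" if "u \<in> betaX" "v \<in> betaX" for u v :: "'a set set"
    using that by (simp add: mem_betaX tri_le_total)
  show "equiv betaX (tri_eq_rel :: ('a set set \<times> 'a set set) set)"
    unfolding tri_eq_rel_eq_kernel by (rule equiv_kernel_restrict)
  show "supp ` (betaX :: 'a set set set) = sX" by (rule supp_image_betaX)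
  show "bij_betw (\<lambda>C. the_elem (supp ` C)) (betaX // (tri_eq_rel :: ('a set set \<times> 'a set set) set)) sX"
    unfolding tri_eq_rel_eq_kernel supp_image_betaX[symmetric]
    by (rule bij_betw_quotient_kernel_restrict)
  show "(\<exists>u\<in>C. \<exists>v\<in>D. tri_le u v) \<longleftrightarrow> supp_le (the_elem (supp ` C)) (the_elem (supp ` D))"
    if "C \<in> betaX // (tri_eq_rel :: ('a set set \<times> 'a set set) set)"
      and "D \<in> betaX // (tri_eq_rel :: ('a set set \<times> 'a set set) set)" for C D
    using that unfolding tri_eq_rel_eq_kernel
    by (intro quotient_kernel_restrict_rel_iff) (simp_all add: mem_betaX tri_le_iff_supp_le)
qed

end
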